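(* Let $K\ge 2$, let $\mathcal{D}$ be a probability distribution on $\mathcal{X}\times\mathcal{Y}$ with $\mathcal{Y}=\{1,\dots,K\}$, and let $\rho$ be a probability distribution over classifiers $h:\mathcal{X}\to\mathcal{Y}$. Let $W_\rho(X,Y)=\mathbb{E}_{h\sim\rho}[\mathbb{1}(h(X)\neq Y)]$ for $(X,Y)\sim\mathcal{D}$. Suppose $\rho$ is competent, i.e. for every $0\le t\le 1/2$, $$\mathbb{P}_{\mathcal{D}}\big(W_\rho\in[t,1/2)\big)\;\ge\;\mathbb{P}_{\mathcal{D}}\big(W_\rho\in[1/2,1-t]\big).$$ Then $$L(h_{\mathrm{MV}})\le\min\left\{\frac{4(K-1)}{K}\Big(\mathbb{E}_{h\sim\rho}[L(h)]-\tfrac12\mathbb{E}_{h,h'\sim\rho}[D(h,h')]\Big),\;\mathbb{E}_{h\sim\rho}[L(h)]\right\}$$ and $$L(h_{\mathrm{MV}})\ge \mathbb{E}_{h\sim\rho}[L(h)]-\mathbb{E}_{h,h'\sim\rho}[D(h,h')].$$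
   Context: The error rate of a classifier is $L(h)=\mathbb{E}_{(X,Y)\sim\mathcal{D}}[\mathbb{1}(h(X)\neq Y)]$. The majority vote classifier is $h_{\mathrm{MV}}(x)=\arg\max_j \mathbb{E}_{h\sim\rho}[\mathbb{1}(h(x)=j)]$ (ties broken arbitrarily). The disagreement rate is $D(h,h')=\mathbb{E}_{X\sim\mathcal{D}}[\mathbb{1}(h(X)\neq h'(X))]$, and in $\mathbb{E}_{h,h'\sim\rho}[D(h,h')]$ the classifiers $h,h'$ are drawn independently from $\rho$. *)

theory Defs
  imports "HOL-Probability.Probability"
begin

text \<open>Labels are natural numbers in {1..K}. D is a probability measure on 'x \<times> nat,
  rho a probability measure on classifiers 'x \<Rightarrow> nat.\<close>

definition err :: "('x \<times> nat) measure \<Rightarrow> ('x \<Rightarrow> nat) \<Rightarrow> real" where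
  "err D h = measure D {z \<in> space D. h (fst z) \<noteq> snd z}"

definition disagree :: "('x \<times> nat) measure \<Rightarrow> ('x \<Rightarrow> nat) \<Rightarrow> ('x \<Rightarrow> nat) \<Rightarrow> real" where
  "disagree D h h' = measure D {z \<in> space D. h (fst z) \<noteq> h' (fst z)}"

definition W_rho :: "('x \<Rightarrow> nat) measure \<Rightarrow> 'x \<times> nat \<Rightarrow> real" where
  "W_rho \<rho> z = measure \<rho> {h \<in> space \<rho>. h (fst z) \<noteq> snd z}"

definition competent :: "('x \<times> nat) measure \<Rightarrow> ('x \<Rightarrow> nat) measure \<Rightarrow> bool" where
  "competent D \<rho> \<longleftrightarrow>
     (\<forall>t::real. 0 \<le> t \<and> t \<le> 1/2 \<longrightarrow>
        measure D {z \<in> space D. W_rho \<rho> z \<in> {t..<1/2}}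
        \<ge> measure D {z \<in> space D. W_rho \<rho> z \<in> {1/2..1-t}})"

definition is_majority_vote :: "nat \<Rightarrow> ('x \<Rightarrow> nat) measure \<Rightarrow> ('x \<Rightarrow> nat) \<Rightarrow> bool" where
  "is_majority_vote K \<rho> hmv \<longleftrightarrow>
     (\<forall>x. hmv x \<in> {1..K} \<and>
        (\<forall>j\<in>{1..K}. measure \<rho> {h \<in> space \<rho>. h x = j} \<le> measure \<rho> {h \<in> space \<rho>. h x = hmv x}))"

end

theory Submission
  imports Defs
begin

text \<open>
  Write p x j for the rho-mass of the classifiers voting j at x, so that W_rho (x, y) = 1 - p x y.
  By Fubini, the expected error of a random classifier is the D-mean of W_rho, and the expected
  disagreement of two independent ones is the D-mean of 1 - sum_j (p x j)^2.
  Pointwise, the majority vote errs only where W_rho >= 1/2, the difference W_rho - (1 - sum_j (p x j)^2)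
  never exceeds its error, and Cauchy-Schwarz over the K - 1 wrong labels gives
  2 W_rho^2 <= 4 (K - 1) / K * (W_rho - (1 - sum_j (p x j)^2) / 2).
  Competence says that the margin (1 - W_rho) on the event W_rho >= 1/2 is stochastically dominated
  by W_rho on the event W_rho < 1/2; integrating tails (layer cake), also after squaring, yields
  P(W_rho >= 1/2) <= E W_rho and P(W_rho >= 1/2) <= 2 E W_rho^2.
\<close>

lemma pred_eq_count_space [measurable (raw)]:
  fixes f g :: "'a \<Rightarrow> 'b::countable"
  assumes f: "f \<in> measurable M (count_space UNIV)" and g: "g \<in> measurable M (count_space UNIV)"
  shows "Measurable.pred M (\<lambda>x. f x = g x)"
  using measurable_compose_countable[OF pred_count_space_const2[OF g] f] by simp

lemma measure_Collect_eq_integral: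
  "measure M {x \<in> space M. P x} = (\<integral>x. (if P x then 1 else 0 :: real) \<partial>M)"
proof -
  have "(\<integral>x. (if P x then 1 else 0 :: real) \<partial>M) = (\<integral>x. indicator {x \<in> space M. P x} x \<partial>M)"
    by (rule Bochner_Integration.integral_cong) (auto simp: indicator_def)
  then show ?thesis
    by (simp add: Int_absorb2)
qed

lemma (in finite_measure) integrable_bounded:
  fixes f :: "'a \<Rightarrow> real"
  assumes "f \<in> borel_measurable M" and "\<And>x. x \<in> space M \<Longrightarrow> \<bar>f x\<bar> \<le> B"
  shows "integrable M f"
  using assms by (intro integrable_const_bound[where B = B]) auto

lemma (in sigma_finite_measure) borel_measurable_measure_Collect:
  assumes "Measurable.pred (N \<Otimes>\<^sub>M M) (\<lambda>(x, y). P x y)"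
  shows "(\<lambda>x. measure M {y \<in> space M. P x y}) \<in> borel_measurable N"
  unfolding measure_Collect_eq_integral
  by (rule borel_measurable_lebesgue_integral) (use assms in \<open>simp add: case_prod_beta'\<close>)

lemma (in pair_prob_space) Fubini_integral_bounded:
  fixes f :: "'a \<Rightarrow> 'b \<Rightarrow> real"
  assumes "(\<lambda>(x, y). f x y) \<in> borel_measurable (M1 \<Otimes>\<^sub>M M2)"
    and "\<And>x y. x \<in> space M1 \<Longrightarrow> y \<in> space M2 \<Longrightarrow> \<bar>f x y\<bar> \<le> B"
  shows "(\<integral>x. (\<integral>y. f x y \<partial>M2) \<partial>M1) = (\<integral>y. (\<integral>x. f x y \<partial>M1) \<partial>M2)"
proof -
  have "integrable (M1 \<Otimes>\<^sub>M M2) (\<lambda>(x, y). f x y)"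
    using assms by (intro P.integrable_bounded[where B = B]) (auto simp: space_pair_measure)
  then show ?thesis
    by (rule Fubini_integral[symmetric])
qed

lemma (in finite_measure) integral_finite_valued:
  fixes X :: "'a \<Rightarrow> 'b::countable" and f :: "'b \<Rightarrow> real"
  assumes [measurable]: "X \<in> measurable M (count_space UNIV)"
    and S: "finite S" "\<And>x. x \<in> space M \<Longrightarrow> X x \<in> S"
  shows "(\<integral>x. f (X x) \<partial>M) = (\<Sum>j\<in>S. f j * measure M {x \<in> space M. X x = j})"
proof -
  have ind: "integrable M (\<lambda>x. if X x = j then 1 else 0 :: real)" for j
    by (rule integrable_bounded[where B = 1]) auto
  have "(\<integral>x. f (X x) \<partial>M) = (\<integral>x. (\<Sum>j\<in>S. f j * (if X x = j then 1 else 0)) \<partial>M)"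
    by (rule Bochner_Integration.integral_cong) (use S in \<open>auto simp: if_distrib sum.delta' cong: if_cong\<close>)
  also have "\<dots> = (\<Sum>j\<in>S. f j * measure M {x \<in> space M. X x = j})"
    using ind by (simp add: measure_Collect_eq_integral)
  finally show ?thesis .
qed

lemma nn_integral_layer_cake:
  assumes "sigma_finite_measure M" and [measurable]: "Z \<in> borel_measurable M"
    and nonneg: "\<And>x. x \<in> space M \<Longrightarrow> 0 \<le> Z x"
  shows "(\<integral>\<^sup>+x. ennreal (Z x) \<partial>M) = (\<integral>\<^sup>+t. emeasure M {x \<in> space M. 0 \<le> t \<and> t \<le> Z x} \<partial>lborel)"
proof -
  interpret pair_sigma_finite M lborel
    using assms(1) by (simp add: lborel.sigma_finite_measure_axioms pair_sigma_finite_def)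
  have "(\<integral>\<^sup>+x. ennreal (Z x) \<partial>M) = (\<integral>\<^sup>+x. (\<integral>\<^sup>+t. indicator {0..Z x} t \<partial>lborel) \<partial>M)"
    by (intro nn_integral_cong) (simp add: nonneg)
  also have "\<dots> = (\<integral>\<^sup>+t. (\<integral>\<^sup>+x. indicator {0..Z x} t \<partial>M) \<partial>lborel)"
  proof (rule Fubini'[symmetric])
    have "(\<lambda>(x, t). indicator {0..Z x} t :: ennreal) = (\<lambda>p. if 0 \<le> snd p \<and> snd p \<le> Z (fst p) then 1 else 0)"
      by (auto simp: indicator_def fun_eq_iff)
    then show "(\<lambda>(x, t). indicator {0..Z x} t :: ennreal) \<in> borel_measurable (M \<Otimes>\<^sub>M lborel)"
      by simp
  qed
  also have "\<dots> = (\<integral>\<^sup>+t. emeasure M {x \<in> space M. 0 \<le> t \<and> t \<le> Z x} \<partial>lborel)"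
  proof (intro nn_integral_cong)
    fix t :: real
    have "(\<integral>\<^sup>+x. indicator {0..Z x} t \<partial>M) = (\<integral>\<^sup>+x. indicator {x \<in> space M. 0 \<le> t \<and> t \<le> Z x} x \<partial>M)"
      by (intro nn_integral_cong) (auto simp: indicator_def)
    then show "(\<integral>\<^sup>+x. indicator {0..Z x} t \<partial>M) = emeasure M {x \<in> space M. 0 \<le> t \<and> t \<le> Z x}"
      by simp
  qed
  finally show ?thesis .
qed

lemma (in finite_measure) integral_mono_tail:
  fixes X Y :: "'a \<Rightarrow> real"
  assumes iX: "integrable M X" and iY: "integrable M Y"
    and nonneg: "\<And>x. x \<in> space M \<Longrightarrow> 0 \<le> X x" "\<And>x. x \<in> space M \<Longrightarrow> 0 \<le> Y x"
    and tail: "\<And>t. 0 < t \<Longrightarrow> measure M {x \<in> space M. t \<le> Y x} \<le> measure M {x \<in> space M. t \<le> X x}"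
  shows "integral\<^sup>L M Y \<le> integral\<^sup>L M X"
proof -
  have [measurable]: "X \<in> borel_measurable M" "Y \<in> borel_measurable M"
    using iX iY by auto
  have "(\<integral>\<^sup>+t. emeasure M {x \<in> space M. 0 \<le> t \<and> t \<le> Y x} \<partial>lborel)
      \<le> (\<integral>\<^sup>+t. emeasure M {x \<in> space M. 0 \<le> t \<and> t \<le> X x} \<partial>lborel)"
  proof (rule nn_integral_mono)
    fix t :: real
    show "emeasure M {x \<in> space M. 0 \<le> t \<and> t \<le> Y x} \<le> emeasure M {x \<in> space M. 0 \<le> t \<and> t \<le> X x}"
    proof (cases "0 < t")
      case True
      then show ?thesis
        using tail[OF True] by (simp add: emeasure_eq_measure)
    next
      case False
      then have "{x \<in> space M. 0 \<le> t \<and> t \<le> Y x} = {x \<in> space M. 0 \<le> t \<and> t \<le> X x}"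
        using nonneg by force
      then show ?thesis
        by simp
    qed
  qed
  then have "(\<integral>\<^sup>+x. ennreal (Y x) \<partial>M) \<le> (\<integral>\<^sup>+x. ennreal (X x) \<partial>M)"
    using nn_integral_layer_cake[of M X] nn_integral_layer_cake[of M Y] nonneg
    by (simp add: sigma_finite_measure_axioms)
  then show ?thesis
    using iX iY nonneg by (simp add: nn_integral_eq_integral integral_nonneg_AE)
qed

definition below_half :: "real \<Rightarrow> real" where
  "below_half w = (if w < 1/2 then w else 0)"

definition above_half_margin :: "real \<Rightarrow> real" where
  "above_half_margin w = (if 1/2 \<le> w then 1 - w else 0)"

lemma borel_measurable_below_half [measurable]: "below_half \<in> borel_measurable borel"
  unfolding below_half_def by measurable

lemma borel_measurable_above_half_margin [measurable]: "above_half_margin \<in> borel_measurable borel"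
  unfolding above_half_margin_def by measurable

lemma competence_tail_le:
  fixes W :: "'a \<Rightarrow> real"
  assumes W_range: "\<And>z. z \<in> space M \<Longrightarrow> 0 \<le> W z \<and> W z \<le> 1"
    and comp: "\<And>t. 0 \<le> t \<Longrightarrow> t \<le> 1/2 \<Longrightarrow>
      measure M {z \<in> space M. W z \<in> {1/2..1-t}} \<le> measure M {z \<in> space M. W z \<in> {t..<1/2}}"
    and "0 < t" "0 < n"
  shows "measure M {z \<in> space M. t \<le> above_half_margin (W z) ^ n}
    \<le> measure M {z \<in> space M. t \<le> below_half (W z) ^ n}"
proof -
  define s where "s = root n t"
  have "0 < s"
    using \<open>0 < t\<close> \<open>0 < n\<close> by (simp add: s_def)
  have pow_iff: "t \<le> a ^ n \<longleftrightarrow> s \<le> a" if "0 \<le> a" for a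
    using real_root_le_iff[OF \<open>0 < n\<close>, of t "a ^ n"] real_root_power_cancel[OF \<open>0 < n\<close> that]
    by (simp add: s_def)
  have above: "{z \<in> space M. t \<le> above_half_margin (W z) ^ n} = {z \<in> space M. W z \<in> {1/2..1-s}}"
    using W_range \<open>0 < s\<close> by (auto simp: pow_iff above_half_margin_def)
  have below: "{z \<in> space M. t \<le> below_half (W z) ^ n} = {z \<in> space M. W z \<in> {s..<1/2}}"
    using W_range \<open>0 < s\<close> by (auto simp: pow_iff below_half_def)
  show ?thesis
  proof (cases "s \<le> 1/2")
    case True
    then show ?thesis
      unfolding above below using comp \<open>0 < s\<close> by simp
  next
    case False
    then have "{z \<in> space M. W z \<in> {1/2..1-s}} = {}"
      by auto
    then show ?thesis
      unfolding above by (simp only: measure_empty measure_nonneg)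
  qed
qed

context prob_space
begin

lemma competence_expectation_le:
  fixes W :: "'a \<Rightarrow> real"
  assumes [measurable]: "W \<in> borel_measurable M"
    and W_range: "\<And>z. z \<in> space M \<Longrightarrow> 0 \<le> W z \<and> W z \<le> 1"
    and comp: "\<And>t. 0 \<le> t \<Longrightarrow> t \<le> 1/2 \<Longrightarrow>
      prob {z \<in> space M. W z \<in> {1/2..1-t}} \<le> prob {z \<in> space M. W z \<in> {t..<1/2}}"
    and "0 < n"
  shows "expectation (\<lambda>z. above_half_margin (W z) ^ n) \<le> expectation (\<lambda>z. below_half (W z) ^ n)"
proof (rule integral_mono_tail)
  have bounds: "0 \<le> above_half_margin (W z) \<and> above_half_margin (W z) \<le> 1"
    "0 \<le> below_half (W z) \<and> below_half (W z) \<le> 1" if "z \<in> space M" for z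
    using W_range[OF that] by (auto simp: above_half_margin_def below_half_def)
  show "integrable M (\<lambda>z. above_half_margin (W z) ^ n)" "integrable M (\<lambda>z. below_half (W z) ^ n)"
    by (auto intro!: integrable_bounded[where B = 1] power_le_one dest: bounds)
  show "0 \<le> above_half_margin (W z) ^ n" "0 \<le> below_half (W z) ^ n" if "z \<in> space M" for z
    using bounds[OF that] by auto
qed (use competence_tail_le[OF W_range comp] \<open>0 < n\<close> in auto)

lemma integrable_comp_unit_interval:
  fixes W :: "'a \<Rightarrow> real" and g :: "real \<Rightarrow> real"
  assumes [measurable]: "W \<in> borel_measurable M" "g \<in> borel_measurable borel"
    and W_range: "\<And>z. z \<in> space M \<Longrightarrow> 0 \<le> W z \<and> W z \<le> 1"
    and g_bound: "\<And>w. 0 \<le> w \<Longrightarrow> w \<le> 1 \<Longrightarrow> \<bar>g w\<bar> \<le> 1"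
  shows "integrable M (\<lambda>z. g (W z))"
  using W_range g_bound by (intro integrable_bounded[where B = 1]) auto

lemma competence_prob_ge_half_le_expectation:
  fixes W :: "'a \<Rightarrow> real"
  assumes [measurable]: "W \<in> borel_measurable M"
    and W_range: "\<And>z. z \<in> space M \<Longrightarrow> 0 \<le> W z \<and> W z \<le> 1"
    and comp: "\<And>t. 0 \<le> t \<Longrightarrow> t \<le> 1/2 \<Longrightarrow>
      prob {z \<in> space M. W z \<in> {1/2..1-t}} \<le> prob {z \<in> space M. W z \<in> {t..<1/2}}"
  shows "prob {z \<in> space M. 1/2 \<le> W z} \<le> expectation W"
proof -
  have "prob {z \<in> space M. 1/2 \<le> W z}
      = expectation (\<lambda>z. W z - below_half (W z) + above_half_margin (W z))"
    unfolding measure_Collect_eq_integral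
    by (rule Bochner_Integration.integral_cong) (auto simp: below_half_def above_half_margin_def)
  also have "\<dots> \<le> expectation W"
  proof -
    have "integrable M W" "integrable M (\<lambda>z. below_half (W z))"
      "integrable M (\<lambda>z. above_half_margin (W z))"
      by (auto intro!: integrable_comp_unit_interval[OF _ _ W_range]
          simp: below_half_def above_half_margin_def)
    then show ?thesis
      using competence_expectation_le[OF _ W_range comp, of 1] by simp
  qed
  finally show ?thesis .
qed

lemma competence_prob_ge_half_le_second_moment:
  fixes W :: "'a \<Rightarrow> real"
  assumes [measurable]: "W \<in> borel_measurable M"
    and W_range: "\<And>z. z \<in> space M \<Longrightarrow> 0 \<le> W z \<and> W z \<le> 1"
    and comp: "\<And>t. 0 \<le> t \<Longrightarrow> t \<le> 1/2 \<Longrightarrow>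
      prob {z \<in> space M. W z \<in> {1/2..1-t}} \<le> prob {z \<in> space M. W z \<in> {t..<1/2}}"
  shows "prob {z \<in> space M. 1/2 \<le> W z} \<le> 2 * expectation (\<lambda>z. W z ^ 2)"
proof -
  have int_W2: "integrable M (\<lambda>z. W z ^ 2)"
    and int_below: "integrable M (\<lambda>z. below_half (W z) ^ 2)"
    and int_above: "integrable M (\<lambda>z. above_half_margin (W z) ^ 2)"
    by (auto intro!: integrable_comp_unit_interval[OF _ _ W_range] power_le_one
        simp: below_half_def above_half_margin_def)
  have "prob {z \<in> space M. 1/2 \<le> W z} \<le>
      expectation (\<lambda>z. 2 * W z ^ 2 - 2 * below_half (W z) ^ 2 + 2 * above_half_margin (W z) ^ 2)"
    unfolding measure_Collect_eq_integral
  proof (rule integral_mono)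
    show "(if 1/2 \<le> W z then 1 else 0)
        \<le> 2 * W z ^ 2 - 2 * below_half (W z) ^ 2 + 2 * above_half_margin (W z) ^ 2" for z
      using zero_le_power2[of "2 * W z - 1"]
      by (auto simp: below_half_def above_half_margin_def power2_eq_square algebra_simps)
  qed (use int_W2 int_below int_above in \<open>auto intro!: integrable_bounded[where B = 1]\<close>)
  also have "\<dots> \<le> 2 * expectation (\<lambda>z. W z ^ 2)"
    using competence_expectation_le[OF _ W_range comp, of 2] int_W2 int_below int_above by simp
  finally show ?thesis .
qed

end

lemma sum_squares_le_max:
  fixes p :: "'a \<Rightarrow> real"
  assumes "finite S" and nonneg: "\<And>j. j \<in> S \<Longrightarrow> 0 \<le> p j" and "sum p S = 1"
    and max: "\<And>j. j \<in> S \<Longrightarrow> p j \<le> p m"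
  shows "(\<Sum>j\<in>S. (p j)^2) \<le> p m"
proof -
  have "(\<Sum>j\<in>S. (p j)^2) \<le> (\<Sum>j\<in>S. p j * p m)"
    using nonneg max by (intro sum_mono) (auto simp: power2_eq_square intro: mult_left_mono)
  also have "\<dots> = p m"
    using \<open>sum p S = 1\<close> by (simp add: sum_distrib_right[symmetric])
  finally show ?thesis .
qed

lemma le_half_if_le_other:
  fixes p :: "'a \<Rightarrow> real"
  assumes "finite S" and nonneg: "\<And>j. j \<in> S \<Longrightarrow> 0 \<le> p j" and "sum p S = 1"
    and "y \<in> S" "m \<in> S" "m \<noteq> y" "p y \<le> p m"
  shows "p y \<le> 1/2"
proof -
  have "p y + p m = sum p {y, m}"
    using \<open>m \<noteq> y\<close> by simp
  also have "\<dots> \<le> sum p S"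
    using assms by (intro sum_mono2) auto
  finally show ?thesis
    using assms by simp
qed

lemma miss_sq_le_card_bound:
  fixes p :: "'a \<Rightarrow> real"
  assumes "finite S" and "sum p S = 1" and "y \<in> S"
  shows "2 * (1 - p y)^2
    \<le> 4 * (real (card S) - 1) / real (card S) * ((1 - p y) - 1/2 * (1 - (\<Sum>j\<in>S. (p j)^2)))"
proof -
  define w where "w = 1 - p y"
  define T where "T = (\<Sum>j\<in>S - {y}. (p j)^2)"
  define k where "k = real (card S)"
  have "0 < card S"
    using assms card_gt_0_iff by blast
  then have "1 \<le> k"
    by (simp add: k_def)
  have "sum p (S - {y}) = w"
    using assms by (simp add: w_def sum_diff1)
  moreover have "real (card (S - {y})) = k - 1"
    using assms \<open>0 < card S\<close> by (simp add: k_def of_nat_diff)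
  ultimately have cauchy_schwarz: "w^2 \<le> T * (k - 1)"
    using sum_squared_le_sum_of_squares[of p "S - {y}"] by (simp add: T_def)
  have sum_sq: "(\<Sum>j\<in>S. (p j)^2) = (p y)^2 + T"
    using assms by (simp add: T_def sum.remove)
  have "2 * w^2 \<le> 2 * (k - 1) / k * (w^2 + T)"
    using cauchy_schwarz \<open>1 \<le> k\<close> by (simp add: field_simps)
  also have "\<dots> = 4 * (k - 1) / k * (w - 1/2 * (1 - (\<Sum>j\<in>S. (p j)^2)))"
    using \<open>1 \<le> k\<close> unfolding sum_sq w_def by (simp add: power2_eq_square field_simps)
  finally show ?thesis
    by (simp add: w_def k_def)
qed

locale classifier_ensemble =
  fixes K :: nat and Mx :: "'x measure" and D :: "('x \<times> nat) measure"
    and \<rho> :: "('x \<Rightarrow> nat) measure"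
  assumes D_prob: "prob_space D"
    and D_sets: "sets D = sets (Mx \<Otimes>\<^sub>M count_space UNIV)"
    and rho_prob: "prob_space \<rho>"
    and rho_range: "\<forall>h\<in>space \<rho>. \<forall>x. h x \<in> {1..K}"
    and eval_meas: "(\<lambda>(h, x). h x) \<in> measurable (\<rho> \<Otimes>\<^sub>M Mx) (count_space UNIV)"
begin

sublocale D: prob_space D
  by (rule D_prob)

sublocale R: prob_space \<rho>
  by (rule rho_prob)

sublocale DR: pair_prob_space D \<rho>
  by (simp add: pair_prob_space_def pair_sigma_finite_def D.sigma_finite_measure_axioms
      R.sigma_finite_measure_axioms D_prob rho_prob)

definition vote_share :: "'x \<Rightarrow> nat \<Rightarrow> real" where
  "vote_share x j = measure \<rho> {h \<in> space \<rho>. h x = j}"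

definition disagreement_at :: "'x \<Rightarrow> real" where
  "disagreement_at x = 1 - (\<Sum>j\<in>{1..K}. (vote_share x j)^2)"

lemma measurable_eval:
  assumes "a \<in> measurable N \<rho>" and "b \<in> measurable N Mx"
  shows "(\<lambda>w. a w (b w)) \<in> measurable N (count_space UNIV)"
  using measurable_compose[OF measurable_Pair[OF assms] eval_meas] by simp

lemma measurable_fst_D [measurable]: "fst \<in> measurable D Mx"
  and measurable_snd_D [measurable]: "snd \<in> measurable D (count_space UNIV)"
  by (simp_all add: measurable_cong_sets[OF D_sets refl])

lemma measurable_eval_sample [measurable]:
  "(\<lambda>w. snd w (fst (fst w))) \<in> measurable (D \<Otimes>\<^sub>M \<rho>) (count_space UNIV)"
  by (rule measurable_eval) measurable

lemma fst_in_space: "z \<in> space D \<Longrightarrow> fst z \<in> space Mx"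
  using sets_eq_imp_space_eq[OF D_sets] by (auto simp: space_pair_measure)

lemma sets_vote: "x \<in> space Mx \<Longrightarrow> {h \<in> space \<rho>. h x = j} \<in> sets \<rho>"
  using measurable_eval[of "\<lambda>h. h" \<rho> "\<lambda>_. x"] by measurable

lemma vote_share_range: "0 \<le> vote_share x j \<and> vote_share x j \<le> 1"
  by (simp add: vote_share_def)

lemma vote_share_sum:
  assumes "x \<in> space Mx"
  shows "(\<Sum>j\<in>{1..K}. vote_share x j) = 1"
proof -
  have "(\<Sum>j\<in>{1..K}. vote_share x j) = measure \<rho> (\<Union>j\<in>{1..K}. {h \<in> space \<rho>. h x = j})"
    unfolding vote_share_def
    by (rule R.finite_measure_finite_Union[symmetric]) (auto simp: disjoint_family_on_def sets_vote assms)
  also have "(\<Union>j\<in>{1..K}. {h \<in> space \<rho>. h x = j}) = space \<rho>"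
    using rho_range by auto
  finally show ?thesis
    by (simp add: R.prob_space)
qed

lemma vote_share_outside:
  assumes "j \<notin> {1..K}"
  shows "vote_share x j = 0"
proof -
  have no_vote: "{h \<in> space \<rho>. h x = j} = {}"
    using assms rho_range by auto
  show ?thesis
    unfolding vote_share_def no_vote by simp
qed

lemma prob_vote_neq:
  assumes "x \<in> space Mx"
  shows "measure \<rho> {h \<in> space \<rho>. h x \<noteq> j} = 1 - vote_share x j"
proof -
  have "{h \<in> space \<rho>. h x \<noteq> j} = space \<rho> - {h \<in> space \<rho>. h x = j}"
    by auto
  then show ?thesis
    using R.prob_compl[OF sets_vote[OF assms]] by (simp add: vote_share_def)
qed

lemma W_rho_eq: "z \<in> space D \<Longrightarrow> W_rho \<rho> z = 1 - vote_share (fst z) (snd z)"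
  unfolding W_rho_def by (rule prob_vote_neq[OF fst_in_space])

lemma W_rho_range: "0 \<le> W_rho \<rho> z \<and> W_rho \<rho> z \<le> 1"
  by (simp add: W_rho_def)

lemma disagreement_at_range:
  assumes "x \<in> space Mx"
  shows "0 \<le> disagreement_at x \<and> disagreement_at x \<le> 1"
proof -
  have "(\<Sum>j\<in>{1..K}. (vote_share x j)^2) \<le> (\<Sum>j\<in>{1..K}. vote_share x j)"
    using vote_share_range by (intro sum_mono) (simp add: power2_eq_square mult_left_le)
  then show ?thesis
    using vote_share_sum[OF assms] by (simp add: disagreement_at_def sum_nonneg)
qed

lemma borel_measurable_W_rho [measurable]: "W_rho \<rho> \<in> borel_measurable D"
  unfolding W_rho_def[abs_def]
  by (rule R.borel_measurable_measure_Collect) measurable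

lemma borel_measurable_vote_share [measurable]: "(\<lambda>z. vote_share (fst z) j) \<in> borel_measurable D"
  unfolding vote_share_def[abs_def]
  by (rule R.borel_measurable_measure_Collect) measurable

lemma borel_measurable_disagreement_at [measurable]:
  "(\<lambda>z. disagreement_at (fst z)) \<in> borel_measurable D"
  unfolding disagreement_at_def by measurable

lemma integral_err_eq: "(\<integral>h. err D h \<partial>\<rho>) = (\<integral>z. W_rho \<rho> z \<partial>D)"
  unfolding err_def W_rho_def measure_Collect_eq_integral
  by (rule DR.Fubini_integral_bounded[where B = 1, symmetric]) measurable

lemma integral_vote_miss:
  assumes "x \<in> space Mx"
  shows "(\<integral>h. 1 - vote_share x (h x) \<partial>\<rho>) = disagreement_at x"
proof -
  have "(\<integral>h. 1 - vote_share x (h x) \<partial>\<rho>) = (\<Sum>j\<in>{1..K}. (1 - vote_share x j) * vote_share x j)"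
    unfolding vote_share_def
    by (rule R.integral_finite_valued) (use measurable_eval[of "\<lambda>h. h" \<rho> "\<lambda>_. x"] assms rho_range in auto)
  also have "\<dots> = disagreement_at x"
    using vote_share_sum[OF assms]
    by (simp add: disagreement_at_def algebra_simps power2_eq_square sum_subtractf)
  finally show ?thesis .
qed

lemma integral_disagree_eq:
  "(\<integral>h. (\<integral>h'. disagree D h h' \<partial>\<rho>) \<partial>\<rho>) = (\<integral>z. disagreement_at (fst z) \<partial>D)"
proof -
  have inner: "(\<integral>h'. disagree D h h' \<partial>\<rho>) = (\<integral>z. 1 - vote_share (fst z) (h (fst z)) \<partial>D)"
    if h: "h \<in> space \<rho>" for h
  proof -
    have [measurable]: "(\<lambda>w. h (fst (fst w))) \<in> measurable (D \<Otimes>\<^sub>M \<rho>) (count_space UNIV)"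
      using h by (intro measurable_eval) measurable
    have "(\<integral>h'. disagree D h h' \<partial>\<rho>)
        = (\<integral>z. measure \<rho> {h' \<in> space \<rho>. h (fst z) \<noteq> h' (fst z)} \<partial>D)"
      unfolding disagree_def measure_Collect_eq_integral
      by (rule DR.Fubini_integral_bounded[where B = 1, symmetric]) (simp_all add: case_prod_beta')
    also have "\<dots> = (\<integral>z. 1 - vote_share (fst z) (h (fst z)) \<partial>D)"
      by (rule Bochner_Integration.integral_cong) (simp_all add: prob_vote_neq fst_in_space eq_commute[of "h _"])
    finally show ?thesis .
  qed
  have [measurable]: "(\<lambda>w. vote_share (fst (fst w)) (snd w (fst (fst w)))) \<in> borel_measurable (D \<Otimes>\<^sub>M \<rho>)"
    by (rule measurable_compose_countable[where f = "\<lambda>j w. vote_share (fst (fst w)) j"]) measurable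
  have "(\<integral>h. (\<integral>h'. disagree D h h' \<partial>\<rho>) \<partial>\<rho>) = (\<integral>h. (\<integral>z. 1 - vote_share (fst z) (h (fst z)) \<partial>D) \<partial>\<rho>)"
    by (rule Bochner_Integration.integral_cong) (simp_all add: inner)
  also have "\<dots> = (\<integral>z. (\<integral>h. 1 - vote_share (fst z) (h (fst z)) \<partial>\<rho>) \<partial>D)"
    by (rule DR.Fubini_integral_bounded[where B = 1, symmetric])
      (measurable, auto simp: vote_share_def)
  also have "\<dots> = (\<integral>z. disagreement_at (fst z) \<partial>D)"
    by (rule Bochner_Integration.integral_cong) (simp_all add: integral_vote_miss fst_in_space)
  finally show ?thesis .
qed

lemma majority_vote_maximal:
  assumes "is_majority_vote K \<rho> hmv"
  shows "hmv x \<in> {1..K}" and "\<And>j. j \<in> {1..K} \<Longrightarrow> vote_share x j \<le> vote_share x (hmv x)"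
  using assms by (auto simp: is_majority_vote_def vote_share_def)

lemma integrable_W_rho: "integrable D (W_rho \<rho>)"
  and integrable_W_rho_sq: "integrable D (\<lambda>z. (W_rho \<rho> z)^2)"
  and integrable_disagreement_at: "integrable D (\<lambda>z. disagreement_at (fst z))"
  using W_rho_range disagreement_at_range[OF fst_in_space]
  by (auto intro!: D.integrable_bounded[where B = 1] power_le_one)

lemma majority_vote_error_imp_W_rho_ge_half:
  assumes mv: "is_majority_vote K \<rho> hmv" and z: "z \<in> space D" and "hmv (fst z) \<noteq> snd z"
  shows "1/2 \<le> W_rho \<rho> z"
proof (cases "snd z \<in> {1..K}")
  case True
  have "vote_share (fst z) (snd z) \<le> 1/2"
    by (rule le_half_if_le_other[where S = "{1..K}" and m = "hmv (fst z)"])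
      (use assms True majority_vote_maximal[OF mv] vote_share_range vote_share_sum[OF fst_in_space[OF z]]
        in auto)
  then show ?thesis
    using W_rho_eq[OF z] by simp
next
  case False
  then show ?thesis
    using W_rho_eq[OF z] vote_share_outside by simp
qed

lemma W_rho_sub_disagreement_le:
  assumes mv: "is_majority_vote K \<rho> hmv" and z: "z \<in> space D"
  shows "W_rho \<rho> z - disagreement_at (fst z) \<le> (if hmv (fst z) \<noteq> snd z then 1 else 0)"
proof -
  have "(\<Sum>j\<in>{1..K}. (vote_share (fst z) j)^2) \<le> vote_share (fst z) (hmv (fst z))"
    by (rule sum_squares_le_max)
      (use majority_vote_maximal[OF mv] vote_share_range vote_share_sum[OF fst_in_space[OF z]] in auto)
  then show ?thesis
    using vote_share_range[of "fst z" "hmv (fst z)"] vote_share_range[of "fst z" "snd z"]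
    by (auto simp: W_rho_eq[OF z] disagreement_at_def)
qed

lemma sq_W_rho_le:
  assumes z: "z \<in> space D" and "snd z \<in> {1..K}"
  shows "2 * (W_rho \<rho> z)^2
    \<le> 4 * (real K - 1) / real K * (W_rho \<rho> z - 1/2 * disagreement_at (fst z))"
  using miss_sq_le_card_bound[of "{1..K}" "vote_share (fst z)" "snd z"] vote_share_sum[OF fst_in_space[OF z]] assms
  by (simp add: W_rho_eq[OF z] disagreement_at_def)

lemma err_majority_vote_le_prob:
  assumes "is_majority_vote K \<rho> hmv"
  shows "err D hmv \<le> D.prob {z \<in> space D. 1/2 \<le> W_rho \<rho> z}"
  unfolding err_def
  by (rule D.finite_measure_mono) (use majority_vote_error_imp_W_rho_ge_half[OF assms] in auto)

lemma err_majority_vote_ge: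
  assumes mv: "is_majority_vote K \<rho> hmv" and [measurable]: "hmv \<in> measurable Mx (count_space UNIV)"
  shows "(\<integral>z. W_rho \<rho> z \<partial>D) - (\<integral>z. disagreement_at (fst z) \<partial>D) \<le> err D hmv"
proof -
  have "(\<integral>z. W_rho \<rho> z \<partial>D) - (\<integral>z. disagreement_at (fst z) \<partial>D)
      = (\<integral>z. W_rho \<rho> z - disagreement_at (fst z) \<partial>D)"
    using integrable_W_rho integrable_disagreement_at by simp
  also have "\<dots> \<le> (\<integral>z. (if hmv (fst z) \<noteq> snd z then 1 else 0) \<partial>D)"
  proof (rule integral_mono)
    show "integrable D (\<lambda>z. W_rho \<rho> z - disagreement_at (fst z))"
      using integrable_W_rho integrable_disagreement_at by (rule Bochner_Integration.integrable_diff)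
    show "integrable D (\<lambda>z. if hmv (fst z) \<noteq> snd z then 1 else 0 :: real)"
      by (rule D.integrable_bounded[where B = 1]) auto
  qed (rule W_rho_sub_disagreement_le[OF mv])
  also have "\<dots> = err D hmv"
    by (simp add: err_def measure_Collect_eq_integral)
  finally show ?thesis .
qed

lemma second_moment_W_rho_le:
  assumes "AE z in D. snd z \<in> {1..K}"
  shows "2 * (\<integral>z. (W_rho \<rho> z)^2 \<partial>D)
    \<le> 4 * (real K - 1) / real K * ((\<integral>z. W_rho \<rho> z \<partial>D) - 1/2 * (\<integral>z. disagreement_at (fst z) \<partial>D))"
proof -
  have "2 * (\<integral>z. (W_rho \<rho> z)^2 \<partial>D) = (\<integral>z. 2 * (W_rho \<rho> z)^2 \<partial>D)"
    by simp
  also have "\<dots> \<le> (\<integral>z. 4 * (real K - 1) / real K * (W_rho \<rho> z - 1/2 * disagreement_at (fst z)) \<partial>D)"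
  proof (rule integral_mono_AE)
    show "AE z in D. 2 * (W_rho \<rho> z)^2
        \<le> 4 * (real K - 1) / real K * (W_rho \<rho> z - 1/2 * disagreement_at (fst z))"
      using assms by (rule AE_mp) (rule AE_I2, blast intro: sq_W_rho_le)
  qed (use integrable_W_rho integrable_W_rho_sq integrable_disagreement_at in auto)
  also have "\<dots> = 4 * (real K - 1) / real K * ((\<integral>z. W_rho \<rho> z \<partial>D) - 1/2 * (\<integral>z. disagreement_at (fst z) \<partial>D))"
    using integrable_W_rho integrable_disagreement_at by simp
  finally show ?thesis .
qed

end

theorem theorem3:
  fixes K :: nat and Mx :: "'x measure" and D :: "('x \<times> nat) measure"
    and \<rho> :: "('x \<Rightarrow> nat) measure" and hmv :: "'x \<Rightarrow> nat"
  assumes K: "K \<ge> 2"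
    and D_prob: "prob_space D"
    and D_sets: "sets D = sets (Mx \<Otimes>\<^sub>M count_space UNIV)"
    and D_labels: "AE z in D. snd z \<in> {1..K}"
    and rho_prob: "prob_space \<rho>"
    and rho_range: "\<forall>h\<in>space \<rho>. \<forall>x. h x \<in> {1..K}"
    and eval_meas: "(\<lambda>(h, x). h x) \<in> measurable (\<rho> \<Otimes>\<^sub>M Mx) (count_space UNIV)"
    and mv: "is_majority_vote K \<rho> hmv"
    and mv_meas: "hmv \<in> measurable Mx (count_space UNIV)"
    and comp: "competent D \<rho>"
  shows "err D hmv \<le> min (4 * (real K - 1) / real K *
              ((\<integral>h. err D h \<partial>\<rho>) - 1/2 * (\<integral>h. (\<integral>h'. disagree D h h' \<partial>\<rho>) \<partial>\<rho>)))
            (\<integral>h. err D h \<partial>\<rho>)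
         \<and> err D hmv \<ge> (\<integral>h. err D h \<partial>\<rho>) - (\<integral>h. (\<integral>h'. disagree D h h' \<partial>\<rho>) \<partial>\<rho>)"
proof -
  interpret classifier_ensemble K Mx D \<rho>
    using D_prob D_sets rho_prob rho_range eval_meas by (simp add: classifier_ensemble_def)
  have "\<And>t. 0 \<le> t \<Longrightarrow> t \<le> 1/2 \<Longrightarrow> D.prob {z \<in> space D. W_rho \<rho> z \<in> {1/2..1-t}}
      \<le> D.prob {z \<in> space D. W_rho \<rho> z \<in> {t..<1/2}}"
    using comp by (simp add: competent_def)
  then have half: "D.prob {z \<in> space D. 1/2 \<le> W_rho \<rho> z} \<le> (\<integral>z. W_rho \<rho> z \<partial>D)"
    "D.prob {z \<in> space D. 1/2 \<le> W_rho \<rho> z} \<le> 2 * (\<integral>z. (W_rho \<rho> z)^2 \<partial>D)"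
    using D.competence_prob_ge_half_le_expectation[OF borel_measurable_W_rho W_rho_range]
      D.competence_prob_ge_half_le_second_moment[OF borel_measurable_W_rho W_rho_range] by auto
  show ?thesis
    unfolding integral_err_eq integral_disagree_eq
    using half err_majority_vote_le_prob[OF mv] err_majority_vote_ge[OF mv mv_meas]
      second_moment_W_rho_le[OF D_labels]
    by auto
qed

end
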